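(* For all positive integers $s,k$ and every integer $n\geq 3$, the graph $sF_{n+1}\cup kF_n$ (the disjoint union of $s$ copies of $F_{n+1}$ and $k$ copies of $F_n$) is $C_3$-supermagic.
   Context: All graphs are finite and simple. For a graph $H$, a graph $G=(V,E)$ has an $H$-covering if every edge of $G$ belongs to a subgraph of $G$ isomorphic to $H$. For such $G$, an $H$-magic labeling is a bijection $\lambda: V\cup E\to\{1,2,\dots,|V|+|E|\}$ for which there is a constant $c$ such that for every subgraph $H'=(V',E')$ of $G$ isomorphic to $H$, $\sum_{v\in V'}\lambda(v)+\sum_{e\in E'}\lambda(e)=c$. It is $H$-supermagic if moreover $\{\lambda(v):v\in V\}=\{1,\dots,|V|\}$; $G$ is $H$-supermagic if it admits such a labeling. $C_k$ is the cycle of length $k$. $sG$ denotes the disjoint union of $s$ copies of $G$, and $\cup$ denotes disjoint union. For $n\geq 3$, the fan $F_n=K_1+P_n$ has vertices $c,v_1,\dots,v_n$ and edges $cv_i$ ($1\le i\le n$) and $v_iv_{i+1}$ ($1\le i\le n-1$). *)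

theory Defs
  imports Main
begin

text \<open>A graph is a pair (vertex set, edge set); edges are 2-element vertex sets.\<close>
type_synonym 'a graph = "'a set \<times> 'a set set"

definition verts :: "'a graph \<Rightarrow> 'a set" where "verts G = fst G"
definition edges :: "'a graph \<Rightarrow> 'a set set" where "edges G = snd G"

definition subgraph :: "'a graph \<Rightarrow> 'a graph \<Rightarrow> bool" where
  "subgraph H G \<longleftrightarrow> verts H \<subseteq> verts G \<and> edges H \<subseteq> edges G
     \<and> (\<forall>e\<in>edges H. e \<subseteq> verts H)"

definition graph_iso :: "'a graph \<Rightarrow> 'b graph \<Rightarrow> bool" where
  "graph_iso G H \<longleftrightarrow> (\<exists>f. bij_betw f (verts G) (verts H)
      \<and> (\<lambda>e. f ` e) ` edges G = edges H)"

definition H_subgraphs :: "'a graph \<Rightarrow> 'b graph \<Rightarrow> 'a graph set" where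
  "H_subgraphs G H = {G'. subgraph G' G \<and> graph_iso G' H}"

definition H_covering :: "'a graph \<Rightarrow> 'b graph \<Rightarrow> bool" where
  "H_covering G H \<longleftrightarrow> (\<forall>e\<in>edges G. \<exists>G'\<in>H_subgraphs G H. e \<in> edges G')"

definition H_supermagic_labeling ::
    "'a graph \<Rightarrow> 'b graph \<Rightarrow> ('a + 'a set \<Rightarrow> nat) \<Rightarrow> bool" where
  "H_supermagic_labeling G H lam \<longleftrightarrow>
     bij_betw lam (Inl ` verts G \<union> Inr ` edges G) {1..card (verts G) + card (edges G)}
     \<and> lam ` (Inl ` verts G) = {1..card (verts G)}
     \<and> (\<exists>c. \<forall>G'\<in>H_subgraphs G H.
            (\<Sum>v\<in>verts G'. lam (Inl v)) + (\<Sum>e\<in>edges G'. lam (Inr e)) = c)"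

definition H_supermagic :: "'a graph \<Rightarrow> 'b graph \<Rightarrow> bool" where
  "H_supermagic G H \<longleftrightarrow> H_covering G H \<and> (\<exists>lam. H_supermagic_labeling G H lam)"

definition C3 :: "nat graph" where
  "C3 = ({0,1,2}, {{0,1},{1,2},{0,2}})"

text \<open>The fan F_n = K_1 + P_n: centre 0, path vertices 1..n.\<close>
definition fan :: "nat \<Rightarrow> nat graph" where
  "fan n = ({0..n}, {{0,i} | i. 1 \<le> i \<and> i \<le> n} \<union> {{i, i+1} | i. 1 \<le> i \<and> i \<le> n - 1})"

definition copies :: "nat \<Rightarrow> 'a graph \<Rightarrow> (nat \<times> 'a) graph" where
  "copies s G = ({(i,v). i < s \<and> v \<in> verts G},
                 {(\<lambda>v. (i,v)) ` e | i e. i < s \<and> e \<in> edges G})"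

definition gunion :: "'a graph \<Rightarrow> 'b graph \<Rightarrow> ('a + 'b) graph" where
  "gunion G1 G2 = (Inl ` verts G1 \<union> Inr ` verts G2,
                   (\<lambda>e. Inl ` e) ` edges G1 \<union> (\<lambda>e. Inr ` e) ` edges G2)"

end

theory Submission
  imports Defs
begin

text \<open>Number the P rim vertices of all F fans consecutively by positions 1, ..., P, and let nV
  be the number of vertices. The centres get P + 1, ..., P + F and the rim vertex at position t
  gets zigzag P t, so that adjacent rim vertices t, t + 1 have label sum t + 1 + \<lceil>P/2\<rceil>. The
  spoke to position t gets nV + P + 1 - t and the rim edge from position t in fan j gets
  nV + P + t - j; these exhaust the edge labels because within one fan the values t - j are
  consecutive. Every C3 consists of a centre and two consecutive rim vertices, and in its weight
  both t and j cancel.\<close>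

lemma sum_blocks_image:
  fixes g :: "nat \<Rightarrow> nat"
  shows "(\<lambda>(j, v). (\<Sum>i<j. g i) + v) ` Sigma {..<F} (\<lambda>j. {1..g j}) = {1..(\<Sum>i<F. g i)}"
proof (induction F)
  case 0
  then show ?case by simp
next
  case (Suc F)
  let ?o = "\<Sum>i<F. g i"
  have "Sigma {..<Suc F} (\<lambda>j. {1..g j}) = Sigma {..<F} (\<lambda>j. {1..g j}) \<union> {F} \<times> {1..g F}"
    by (auto simp: less_Suc_eq)
  moreover have "(\<lambda>(j, v). (\<Sum>i<j. g i) + v) ` ({F} \<times> {1..g F}) = (+) ?o ` {1..g F}"
    by (auto simp: image_def)
  moreover have "(+) ?o ` {1..g F} = {?o + 1..?o + g F}"
    by (simp add: image_add_atLeastAtMost)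
  moreover have "{1..?o} \<union> {?o + 1..?o + g F} = {1..(\<Sum>i<Suc F. g i)}"
    by auto
  ultimately show ?case using Suc by (simp only: image_Un)
qed

lemma Sigma_lessThan_add:
  fixes s k :: nat
  shows "Sigma {..<s + k} (\<lambda>j. if j < s then A else B)
    = {..<s} \<times> A \<union> (\<lambda>(i, v). (s + i, v)) ` ({..<k} \<times> B)"
proof (intro equalityI subsetI)
  fix x assume x: "x \<in> Sigma {..<s + k} (\<lambda>j. if j < s then A else B)"
  show "x \<in> {..<s} \<times> A \<union> (\<lambda>(i, v). (s + i, v)) ` ({..<k} \<times> B)"
  proof (cases "fst x < s")
    case False
    then have "x = (\<lambda>(i, v). (s + i, v)) (fst x - s, snd x)" "(fst x - s, snd x) \<in> {..<k} \<times> B"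
      using x by auto
    then show ?thesis by blast
  qed (use x in auto)
qed auto

definition zigzag :: "nat \<Rightarrow> nat \<Rightarrow> nat" where
  "zigzag P t = (if odd t then (t + 1) div 2 else (P + 1) div 2 + t div 2)"

lemma zigzag_add_Suc: "1 \<le> t \<Longrightarrow> zigzag P t + zigzag P (Suc t) = t + 1 + (P + 1) div 2"
  unfolding zigzag_def by (cases "odd t") (auto elim!: oddE evenE)

lemma zigzag_image: "zigzag P ` {1..P} = {1..P}"
proof
  show "zigzag P ` {1..P} \<subseteq> {1..P}"
    unfolding zigzag_def by (auto elim!: oddE evenE)
  show "{1..P} \<subseteq> zigzag P ` {1..P}"
  proof
    fix y assume y: "y \<in> {1..P}"
    show "y \<in> zigzag P ` {1..P}"
    proof (cases "y \<le> (P + 1) div 2")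
      case True
      then have "zigzag P (2 * y - 1) = y" "2 * y - 1 \<in> {1..P}"
        using y unfolding zigzag_def by auto
      then show ?thesis by (metis image_eqI)
    next
      case False
      then have "zigzag P (2 * (y - (P + 1) div 2)) = y" "2 * (y - (P + 1) div 2) \<in> {1..P}"
        using y unfolding zigzag_def by auto
      then show ?thesis by (metis image_eqI)
    qed
  qed
qed

lemma graph_iso_triangle_C3:
  assumes "distinct [a, b, c]"
  shows "graph_iso ({a, b, c}, {{a, b}, {b, c}, {a, c}}) C3"
proof -
  define f where "f x = (if x = a then 0 else if x = b then 1 else (2::nat))" for x
  have f: "f a = 0" "f b = 1" "f c = 2" using assms by (auto simp: f_def)
  have "bij_betw f {a, b, c} {0, 1, 2}"
    unfolding bij_betw_def inj_on_def using assms f by auto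
  moreover have "(\<lambda>e. f ` e) ` {{a, b}, {b, c}, {a, c}} = {{0, 1}, {1, 2}, {0, 2}}"
    using f by auto
  ultimately show ?thesis unfolding graph_iso_def C3_def verts_def edges_def by auto
qed

lemma graph_iso_C3_imp_triangle:
  assumes "graph_iso G' C3" and "\<forall>e\<in>edges G'. e \<subseteq> verts G'"
  obtains a b c where "distinct [a, b, c]" "verts G' = {a, b, c}"
    "edges G' = {{a, b}, {b, c}, {a, c}}"
proof -
  obtain f where f: "bij_betw f (verts G') {0, 1, 2::nat}"
    and ef: "(\<lambda>e. f ` e) ` edges G' = {{0, 1}, {1, 2}, {0, 2}}"
    using assms(1) unfolding graph_iso_def C3_def verts_def edges_def by auto
  define g where "g = inv_into (verts G') f"
  have g: "bij_betw g {0, 1, 2} (verts G')" unfolding g_def using f by (rule bij_betw_inv_into)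
  have "edges G' = (\<lambda>e. g ` e) ` ((\<lambda>e. f ` e) ` edges G')"
  proof -
    have "g ` f ` e = e" if "e \<in> edges G'" for e
      unfolding g_def using f assms(2) that by (simp add: bij_betw_def inv_into_image_cancel)
    then show ?thesis by (simp add: image_image)
  qed
  also have "\<dots> = {{g 0, g 1}, {g 1, g 2}, {g 0, g 2}}" using ef by simp
  finally have "edges G' = {{g 0, g 1}, {g 1, g 2}, {g 0, g 2}}" .
  moreover have "verts G' = {g 0, g 1, g 2}" "distinct [g 0, g 1, g 2]"
    using g unfolding bij_betw_def inj_on_def by auto
  ultimately show ?thesis using that by blast
qed

lemma fan_verts: "verts (fan M) = {0..M}"
  unfolding fan_def verts_def by simp

lemma fan_edges: "edges (fan M) = (\<lambda>v. {0, v}) ` {1..M} \<union> (\<lambda>v. {v, Suc v}) ` {1..M - 1}"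
  unfolding fan_def edges_def by auto

lemma fan_edge_iff:
  "{x, y} \<in> edges (fan M) \<longleftrightarrow>
     (x = 0 \<and> 1 \<le> y \<and> y \<le> M) \<or> (y = 0 \<and> 1 \<le> x \<and> x \<le> M)
     \<or> (1 \<le> x \<and> y = Suc x \<and> y \<le> M) \<or> (1 \<le> y \<and> x = Suc y \<and> x \<le> M)"
  by (auto simp: fan_edges doubleton_eq_iff)

lemma fan_triangle_at_centre:
  assumes "{0, y} \<in> edges (fan M)" "{y, z} \<in> edges (fan M)" "{0, z} \<in> edges (fan M)"
  shows "\<exists>v. 1 \<le> v \<and> Suc v \<le> M \<and> {0, y, z} = {0, v, Suc v}"
  using assms unfolding fan_edge_iff by (auto simp: insert_commute)

lemma fan_triangle:
  assumes "{x, y} \<in> edges (fan M)" "{y, z} \<in> edges (fan M)" "{x, z} \<in> edges (fan M)"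
  shows "\<exists>v. 1 \<le> v \<and> Suc v \<le> M \<and> {x, y, z} = {0, v, Suc v}"
proof -
  have "x = 0 \<or> y = 0 \<or> z = 0"
    using assms unfolding fan_edge_iff by auto
  then show ?thesis
    using assms fan_triangle_at_centre[of y M z] fan_triangle_at_centre[of x M z]
      fan_triangle_at_centre[of x M y]
    by (auto simp: insert_commute)
qed

lemma copies_verts: "verts (copies s G) = {..<s} \<times> verts G"
  unfolding copies_def verts_def by auto

lemma copies_edges: "edges (copies s G) = (\<lambda>(i, e). Pair i ` e) ` ({..<s} \<times> edges G)"
  unfolding copies_def edges_def by auto

lemma copies_fan_edges:
  "edges (copies s (fan M)) = (\<lambda>(i, v). {(i, 0), (i, v)}) ` ({..<s} \<times> {1..M})
     \<union> (\<lambda>(i, v). {(i, v), (i, Suc v)}) ` ({..<s} \<times> {1..M - 1})"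
proof -
  have "(\<lambda>(i, e). Pair i ` e) ` ({..<s} \<times> f ` V) = (\<lambda>(i, v). Pair i ` f v) ` ({..<s} \<times> V)"
    for f :: "nat \<Rightarrow> nat set" and V
    by force
  then show ?thesis
    unfolding copies_edges fan_edges Sigma_Un_distrib2 image_Un by simp
qed

lemma triangle_edges_eq_pairs:
  assumes "distinct [a, b, c]"
  shows "{{a, b}, {b, c}, {a, c}} = {{x, y} | x y. x \<in> {a, b, c} \<and> y \<in> {a, b, c} \<and> x \<noteq> y}"
  using assms by (auto simp: insert_commute)

text \<open>The disjoint union of the fans F_(m j), j < F, inside an ambient vertex type: fan j has
  centre emb (j, 0) and rim (path) emb (j, 1), ..., emb (j, m j).\<close>
locale fan_union =
  fixes F :: nat and m :: "nat \<Rightarrow> nat" and emb :: "nat \<times> nat \<Rightarrow> 'a"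
  assumes path_length_ge_2: "j < F \<Longrightarrow> 2 \<le> m j"
    and inj_on_emb: "inj_on emb (Sigma {..<F} (\<lambda>j. {..m j}))"
begin

definition "vertex_idx = Sigma {..<F} (\<lambda>j. {..m j})"
definition "spoke_idx = Sigma {..<F} (\<lambda>j. {1..m j})"
definition "rim_idx = Sigma {..<F} (\<lambda>j. {1..m j - 1})"

definition "spoke p = {emb (fst p, 0), emb p}"
definition "rim_edge p = {emb p, emb (fst p, Suc (snd p))}"

definition "G = (emb ` vertex_idx, spoke ` spoke_idx \<union> rim_edge ` rim_idx)"

definition "triangle p = ({emb (fst p, 0), emb p, emb (fst p, Suc (snd p))},
   {spoke p, rim_edge p, spoke (fst p, Suc (snd p))})"

definition "offset j = (\<Sum>i<j. m i)"
definition "P = offset F"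
definition "Q = (\<Sum>i<F. m i - 1)"
definition "nV = P + F"

definition "pos p = offset (fst p) + snd p"

definition "vlabel p = (if snd p = 0 then P + 1 + fst p else zigzag P (pos p))"

text \<open>An edge is a spoke iff it contains a centre, and pos (j, v) is the larger position of the
  ends of the spoke to (j, v) but the smaller one of the ends of the rim edge from (j, v).\<close>
definition "elabel S = (if \<exists>p\<in>S. snd p = 0 then nV + P + 1 - Max (pos ` S)
   else nV + P + Min (pos ` S) - Max (fst ` S))"

definition "label x = (case x of
     Inl u \<Rightarrow> vlabel (the_inv_into vertex_idx emb u)
   | Inr e \<Rightarrow> elabel (the_inv_into vertex_idx emb ` e))"

lemma vertex_idx_iff: "(j, v) \<in> vertex_idx \<longleftrightarrow> j < F \<and> v \<le> m j"
  by (simp add: vertex_idx_def)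

lemma spoke_idx_iff: "(j, v) \<in> spoke_idx \<longleftrightarrow> j < F \<and> 1 \<le> v \<and> v \<le> m j"
  by (simp add: spoke_idx_def)

lemma rim_idx_iff: "(j, v) \<in> rim_idx \<longleftrightarrow> j < F \<and> 1 \<le> v \<and> v < m j"
  using path_length_ge_2[of j] by (auto simp: rim_idx_def)

lemma finite_idx: "finite vertex_idx" "finite spoke_idx" "finite rim_idx"
  by (auto simp: vertex_idx_def spoke_idx_def rim_idx_def)

lemma emb_eq_iff:
  "p \<in> vertex_idx \<Longrightarrow> q \<in> vertex_idx \<Longrightarrow> emb p = emb q \<longleftrightarrow> p = q"
  using inj_on_emb unfolding vertex_idx_def inj_on_def by blast

lemma the_inv_into_emb: "p \<in> vertex_idx \<Longrightarrow> the_inv_into vertex_idx emb (emb p) = p"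
  using inj_on_emb by (simp add: vertex_idx_def the_inv_into_f_f)

lemma offset_Suc: "offset (Suc j) = offset j + m j"
  by (simp add: offset_def)

lemma le_offset: "j \<le> F \<Longrightarrow> j \<le> offset j"
proof (induction j)
  case (Suc j)
  then show ?case using path_length_ge_2[of j] by (simp add: offset_Suc)
qed simp

lemma offset_eq_rim_count: "j \<le> F \<Longrightarrow> offset j = (\<Sum>i<j. m i - 1) + j"
proof (induction j)
  case (Suc j)
  then show ?case using path_length_ge_2[of j] by (simp add: offset_Suc)
qed (simp add: offset_def)

lemma pos_image: "pos ` spoke_idx = {1..P}"
  using sum_blocks_image[of m F] unfolding pos_def spoke_idx_def P_def offset_def
  by (simp add: case_prod_beta' cong: image_cong)

lemma pos_le_P: "p \<in> spoke_idx \<Longrightarrow> pos p \<le> P"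
  using pos_image by auto

lemma fst_le_pos: "p \<in> spoke_idx \<Longrightarrow> fst p \<le> pos p"
  using le_offset[of "fst p"] by (cases p) (auto simp: pos_def spoke_idx_iff)

lemma rim_label_image: "(\<lambda>p. nV + P + pos p - fst p) ` rim_idx = {nV + P + 1..nV + P + Q}"
proof -
  have "nV + P + pos (j, v) - j = nV + P + ((\<Sum>i<j. m i - 1) + v)" if "(j, v) \<in> rim_idx" for j v
    using offset_eq_rim_count[of j] that by (auto simp: rim_idx_iff pos_def)
  then have "(\<lambda>p. nV + P + pos p - fst p) ` rim_idx
      = (+) (nV + P) ` ((\<lambda>(j, v). (\<Sum>i<j. m i - 1) + v) ` rim_idx)"
    by (force simp: image_iff)
  also have "(\<lambda>(j, v). (\<Sum>i<j. m i - 1) + v) ` rim_idx = {1..Q}"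
    unfolding rim_idx_def Q_def by (rule sum_blocks_image)
  finally show ?thesis by (simp add: image_add_atLeastAtMost)
qed

lemma spoke_label_image: "(\<lambda>p. nV + P + 1 - pos p) ` spoke_idx = {nV + 1..nV + P}"
proof -
  have "(\<lambda>p. nV + P + 1 - pos p) ` spoke_idx = (\<lambda>t. nV + P + 1 - t) ` {1..P}"
    using pos_image by (simp add: image_image[symmetric])
  also have "\<dots> = {nV + 1..nV + P}"
  proof
    show "(\<lambda>t. nV + P + 1 - t) ` {1..P} \<subseteq> {nV + 1..nV + P}" by auto
    show "{nV + 1..nV + P} \<subseteq> (\<lambda>t. nV + P + 1 - t) ` {1..P}"
    proof
      fix y assume "y \<in> {nV + 1..nV + P}"
      then have "y = nV + P + 1 - (nV + P + 1 - y)" "nV + P + 1 - y \<in> {1..P}" by auto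
      then show "y \<in> (\<lambda>t. nV + P + 1 - t) ` {1..P}" by blast
    qed
  qed
  finally show ?thesis .
qed

lemma vlabel_image: "vlabel ` vertex_idx = {1..nV}"
proof -
  have "vertex_idx = (\<lambda>j. (j, 0)) ` {..<F} \<union> spoke_idx"
    by (auto simp: vertex_idx_def spoke_idx_def image_iff)
  moreover have "vlabel ` (\<lambda>j. (j, 0)) ` {..<F} = (+) (P + 1) ` {..<F}"
    unfolding image_image by (simp add: vlabel_def)
  moreover have "vlabel ` spoke_idx = zigzag P ` pos ` spoke_idx"
    unfolding image_image by (rule image_cong) (auto simp: vlabel_def spoke_idx_def)
  ultimately have "vlabel ` vertex_idx = (+) (P + 1) ` {..<F} \<union> zigzag P ` {1..P}"
    by (simp add: image_Un pos_image)
  also have "(+) (P + 1) ` {..<F} = {P + 1..<P + 1 + F}"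
    unfolding lessThan_atLeast0 image_add_atLeastLessThan by (simp add: add.commute)
  finally show ?thesis using zigzag_image by (auto simp: nV_def)
qed

lemma the_inv_into_spoke:
  "(j, v) \<in> spoke_idx \<Longrightarrow> the_inv_into vertex_idx emb ` spoke (j, v) = {(j, 0), (j, v)}"
  by (auto simp: spoke_def spoke_idx_iff vertex_idx_iff the_inv_into_emb)

lemma the_inv_into_rim_edge:
  "(j, v) \<in> rim_idx \<Longrightarrow> the_inv_into vertex_idx emb ` rim_edge (j, v) = {(j, v), (j, Suc v)}"
  by (auto simp: rim_edge_def rim_idx_iff vertex_idx_iff the_inv_into_emb)

lemma label_vertex: "p \<in> vertex_idx \<Longrightarrow> label (Inl (emb p)) = vlabel p"
  by (simp add: label_def the_inv_into_emb)

lemma label_spoke: "p \<in> spoke_idx \<Longrightarrow> label (Inr (spoke p)) = nV + P + 1 - pos p"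
  by (cases p) (simp add: label_def the_inv_into_spoke elabel_def pos_def)

lemma label_rim_edge: "p \<in> rim_idx \<Longrightarrow> label (Inr (rim_edge p)) = nV + P + pos p - fst p"
  by (cases p) (auto simp: label_def the_inv_into_rim_edge elabel_def pos_def rim_idx_iff)

lemma inj_on_spoke: "inj_on spoke spoke_idx"
proof (rule inj_onI)
  fix p q assume "p \<in> spoke_idx" "q \<in> spoke_idx" "spoke p = spoke q"
  then show "p = q"
    using the_inv_into_spoke[of "fst p" "snd p"] the_inv_into_spoke[of "fst q" "snd q"]
    by (auto simp: spoke_idx_iff doubleton_eq_iff prod_eq_iff)
qed

lemma inj_on_rim_edge: "inj_on rim_edge rim_idx"
proof (rule inj_onI)
  fix p q assume "p \<in> rim_idx" "q \<in> rim_idx" "rim_edge p = rim_edge q"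
  then show "p = q"
    using the_inv_into_rim_edge[of "fst p" "snd p"] the_inv_into_rim_edge[of "fst q" "snd q"]
    by (auto simp: doubleton_eq_iff prod_eq_iff)
qed

lemma spoke_neq_rim_edge:
  assumes "p \<in> spoke_idx" "q \<in> rim_idx"
  shows "spoke p \<noteq> rim_edge q"
proof
  assume "spoke p = rim_edge q"
  then have "(fst p, 0) \<in> the_inv_into vertex_idx emb ` rim_edge q"
    using the_inv_into_spoke[of "fst p" "snd p"] assms(1) by simp
  then show False
    using the_inv_into_rim_edge[of "fst q" "snd q"] assms(2) by (auto simp: rim_idx_iff)
qed

lemma card_verts: "card (verts G) = nV"
proof -
  have "card (verts G) = card vertex_idx"
    using inj_on_emb by (simp add: G_def verts_def vertex_idx_def card_image)
  also have "\<dots> = (\<Sum>j<F. Suc (m j))" by (simp add: vertex_idx_def card_SigmaI)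
  also have "\<dots> = nV"
    by (simp add: nV_def P_def offset_def sum.distrib[of m "\<lambda>_. 1", simplified])
  finally show ?thesis .
qed

lemma card_edges: "card (edges G) = P + Q"
proof -
  have "card (edges G) = card (spoke ` spoke_idx) + card (rim_edge ` rim_idx)"
  proof -
    have "spoke ` spoke_idx \<inter> rim_edge ` rim_idx = {}"
      using spoke_neq_rim_edge by blast
    then show ?thesis using finite_idx by (simp add: G_def edges_def card_Un_disjoint)
  qed
  also have "\<dots> = P + Q"
    using inj_on_spoke inj_on_rim_edge
    by (simp add: card_image spoke_idx_def rim_idx_def card_SigmaI P_def offset_def Q_def)
  finally show ?thesis .
qed

lemma label_verts: "label ` Inl ` verts G = {1..card (verts G)}"
proof -
  have "label ` Inl ` verts G = vlabel ` vertex_idx"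
    unfolding G_def verts_def fst_conv image_image by (rule image_cong) (auto simp: label_vertex)
  then show ?thesis using vlabel_image card_verts by simp
qed

lemma label_edges: "label ` Inr ` edges G = {nV + 1..nV + P + Q}"
proof -
  have "label ` Inr ` spoke ` spoke_idx = (\<lambda>p. nV + P + 1 - pos p) ` spoke_idx"
    unfolding image_image by (rule image_cong) (auto simp: label_spoke)
  moreover have "label ` Inr ` rim_edge ` rim_idx = (\<lambda>p. nV + P + pos p - fst p) ` rim_idx"
    unfolding image_image by (rule image_cong) (auto simp: label_rim_edge)
  ultimately have "label ` Inr ` edges G = {nV + 1..nV + P} \<union> {nV + P + 1..nV + P + Q}"
    using spoke_label_image rim_label_image by (simp add: G_def edges_def image_Un)
  also have "\<dots> = {nV + 1..nV + P + Q}" by auto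
  finally show ?thesis .
qed

lemma bij_betw_label:
  "bij_betw label (Inl ` verts G \<union> Inr ` edges G) {1..card (verts G) + card (edges G)}"
proof -
  let ?A = "Inl ` verts G \<union> Inr ` edges G"
  have finite: "finite (verts G)" "finite (edges G)"
    using finite_idx by (simp_all add: G_def verts_def edges_def)
  have image: "label ` ?A = {1..card (verts G) + card (edges G)}"
    using label_verts label_edges card_verts card_edges by (auto simp: image_Un)
  have "card ?A = card (verts G) + card (edges G)"
    using finite by (subst card_Un_disjoint) (auto simp: card_image)
  then have "inj_on label ?A"
    using finite image by (intro eq_card_imp_inj_on) auto
  then show ?thesis using image by (simp add: bij_betw_def)
qed

lemma edge_imp_fan_edge:
  assumes "p \<in> vertex_idx" "q \<in> vertex_idx" "{emb p, emb q} \<in> edges G"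
  shows "fst q = fst p \<and> {snd p, snd q} \<in> edges (fan (m (fst p)))"
proof -
  have pq: "the_inv_into vertex_idx emb ` {emb p, emb q} = {p, q}"
    using assms the_inv_into_emb by auto
  from assms(3) consider (spoke) j v where "(j, v) \<in> spoke_idx" "{emb p, emb q} = spoke (j, v)"
    | (rim) j v where "(j, v) \<in> rim_idx" "{emb p, emb q} = rim_edge (j, v)"
    unfolding G_def edges_def by auto
  then show ?thesis
  proof cases
    case spoke
    then have "{p, q} = {(j, 0), (j, v)}" using pq the_inv_into_spoke by metis
    then show ?thesis using spoke by (auto simp: doubleton_eq_iff spoke_idx_iff fan_edge_iff)
  next
    case rim
    then have "{p, q} = {(j, v), (j, Suc v)}" using pq the_inv_into_rim_edge by metis
    then show ?thesis using rim by (auto simp: doubleton_eq_iff rim_idx_iff fan_edge_iff)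
  qed
qed

lemma triangle_distinct:
  "(j, v) \<in> rim_idx \<Longrightarrow> distinct [emb (j, 0), emb (j, v), emb (j, Suc v)]"
  by (auto simp: emb_eq_iff vertex_idx_iff rim_idx_iff)

lemma triangle_in_C3_subgraphs:
  assumes "p \<in> rim_idx"
  shows "triangle p \<in> H_subgraphs G C3"
proof -
  obtain j v where p: "p = (j, v)" by fastforce
  have "(j, v) \<in> spoke_idx" "(j, Suc v) \<in> spoke_idx"
    using assms p by (auto simp: spoke_idx_iff rim_idx_iff)
  then have "spoke (j, v) \<in> edges G" "spoke (j, Suc v) \<in> edges G" "rim_edge (j, v) \<in> edges G"
    using assms p by (auto simp: G_def edges_def)
  moreover have "{emb (j, 0), emb (j, v), emb (j, Suc v)} \<subseteq> verts G"
    using assms p by (auto simp: G_def verts_def vertex_idx_iff rim_idx_iff)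
  ultimately have "subgraph (triangle p) G"
    using p unfolding subgraph_def triangle_def
    by (auto simp: verts_def edges_def spoke_def rim_edge_def)
  moreover have "graph_iso (triangle p) C3"
    using graph_iso_triangle_C3[OF triangle_distinct] assms p
    by (simp add: triangle_def spoke_def rim_edge_def)
  ultimately show ?thesis by (simp add: H_subgraphs_def)
qed

lemma triangle_edges: "p \<in> rim_idx \<Longrightarrow>
    edges (triangle p) = {{x, y} | x y. x \<in> verts (triangle p) \<and> y \<in> verts (triangle p) \<and> x \<noteq> y}"
  using triangle_edges_eq_pairs[OF triangle_distinct[of "fst p" "snd p"]]
  by (simp add: triangle_def verts_def edges_def spoke_def rim_edge_def)

lemma C3_subgraph_is_triangle:
  assumes "G' \<in> H_subgraphs G C3"
  shows "\<exists>p\<in>rim_idx. G' = triangle p"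
proof -
  have sub: "subgraph G' G" and iso: "graph_iso G' C3" using assms by (auto simp: H_subgraphs_def)
  obtain a b c where abc: "distinct [a, b, c]" "verts G' = {a, b, c}"
    "edges G' = {{a, b}, {b, c}, {a, c}}"
    using graph_iso_C3_imp_triangle[OF iso] sub by (auto simp: subgraph_def)
  have "{a, b, c} \<subseteq> emb ` vertex_idx" using sub abc by (auto simp: subgraph_def G_def verts_def)
  then obtain pa pb pc where p: "pa \<in> vertex_idx" "pb \<in> vertex_idx" "pc \<in> vertex_idx"
    "a = emb pa" "b = emb pb" "c = emb pc"
    by auto
  have "{emb pa, emb pb} \<in> edges G" "{emb pb, emb pc} \<in> edges G" "{emb pa, emb pc} \<in> edges G"
    using sub abc p by (auto simp: subgraph_def)
  note same_fan = edge_imp_fan_edge[OF p(1,2) this(1)] edge_imp_fan_edge[OF p(2,3) this(2)]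
    edge_imp_fan_edge[OF p(1,3) this(3)]
  define j where "j = fst pa"
  have j: "pa = (j, snd pa)" "pb = (j, snd pb)" "pc = (j, snd pc)"
    using same_fan by (simp_all add: j_def prod_eq_iff)
  obtain v where v: "1 \<le> v" "Suc v \<le> m j" "{snd pa, snd pb, snd pc} = {0, v, Suc v}"
    using fan_triangle[of "snd pa" "snd pb" "m j" "snd pc"] same_fan by (auto simp: j_def)
  have rim: "(j, v) \<in> rim_idx"
    using v p(1) j(1) vertex_idx_iff[of j "snd pa"] by (simp add: rim_idx_iff)
  have "verts G' = emb ` Pair j ` {snd pa, snd pb, snd pc}"
    using abc(2) p j by (metis image_insert image_empty)
  then have "verts G' = verts (triangle (j, v))"
    using v by (simp add: triangle_def verts_def)
  moreover have "edges G' = {{x, y} | x y. x \<in> verts G' \<and> y \<in> verts G' \<and> x \<noteq> y}"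
    using abc triangle_edges_eq_pairs[OF abc(1)] by simp
  ultimately have "verts G' = verts (triangle (j, v))" "edges G' = edges (triangle (j, v))"
    using triangle_edges[OF rim] by simp_all
  then show ?thesis using rim by (metis prod.expand edges_def verts_def)
qed

lemma C3_subgraphs_eq: "H_subgraphs G C3 = triangle ` rim_idx"
  using triangle_in_C3_subgraphs C3_subgraph_is_triangle by blast

lemma triangle_weight:
  assumes "p \<in> rim_idx"
  shows "(\<Sum>x\<in>verts (triangle p). label (Inl x)) + (\<Sum>e\<in>edges (triangle p). label (Inr e))
    = 3 * nV + 4 * P + 3 + (P + 1) div 2"
proof -
  obtain j v where p: "p = (j, v)" by fastforce
  have idx: "(j, v) \<in> spoke_idx" "(j, Suc v) \<in> spoke_idx" "(j, 0) \<in> vertex_idx"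
    "(j, v) \<in> vertex_idx" "(j, Suc v) \<in> vertex_idx" "1 \<le> v"
    using assms p by (auto simp: spoke_idx_iff rim_idx_iff vertex_idx_iff)
  have distinct: "distinct [emb (j, 0), emb (j, v), emb (j, Suc v)]"
    using triangle_distinct assms p by simp
  then have "spoke (j, v) \<noteq> rim_edge (j, v)" "spoke (j, Suc v) \<noteq> rim_edge (j, v)"
    "spoke (j, v) \<noteq> spoke (j, Suc v)"
    by (auto simp: spoke_def rim_edge_def doubleton_eq_iff)
  then have "(\<Sum>e\<in>edges (triangle p). label (Inr e))
      = (nV + P + 1 - pos (j, v)) + (nV + P + pos (j, v) - j) + (nV + P + 1 - pos (j, Suc v))"
    using idx assms p by (simp add: triangle_def edges_def label_spoke label_rim_edge)
  moreover have "(\<Sum>x\<in>verts (triangle p). label (Inl x))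
      = (P + 1 + j) + (pos (j, v) + 1 + (P + 1) div 2)"
    using distinct idx zigzag_add_Suc[of "pos (j, v)" P] p
    by (simp add: triangle_def verts_def label_vertex vlabel_def pos_def)
  moreover have "pos (j, Suc v) = Suc (pos (j, v))" "pos (j, Suc v) \<le> P" "j \<le> pos (j, v)"
    using pos_le_P[OF idx(2)] fst_le_pos[OF idx(1)] by (simp_all add: pos_def)
  ultimately show ?thesis by simp
qed

lemma C3_covering: "H_covering G C3"
  unfolding H_covering_def C3_subgraphs_eq
proof
  fix e assume "e \<in> edges G"
  then consider (spoke) j v where "(j, v) \<in> spoke_idx" "e = spoke (j, v)"
    | (rim) p where "p \<in> rim_idx" "e = rim_edge p"
    unfolding G_def edges_def by auto
  then show "\<exists>G'\<in>triangle ` rim_idx. e \<in> edges G'"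
  proof cases
    case spoke
    show ?thesis
    proof (cases "v < m j")
      case True
      then have "(j, v) \<in> rim_idx" "e \<in> edges (triangle (j, v))"
        using spoke by (simp_all add: spoke_idx_iff rim_idx_iff triangle_def edges_def)
      then show ?thesis by blast
    next
      case False
      then have "(j, v - 1) \<in> rim_idx" "e \<in> edges (triangle (j, v - 1))"
        using spoke path_length_ge_2[of j]
        by (simp_all add: spoke_idx_iff rim_idx_iff triangle_def edges_def)
      then show ?thesis by blast
    qed
  next
    case rim
    then show ?thesis by (force simp: triangle_def edges_def)
  qed
qed

theorem C3_supermagic: "H_supermagic G C3"
  unfolding H_supermagic_def H_supermagic_labeling_def C3_subgraphs_eq
  using C3_covering bij_betw_label label_verts triangle_weight by blast

end

definition two_fan_emb :: "nat \<Rightarrow> nat \<times> nat \<Rightarrow> (nat \<times> nat) + (nat \<times> nat)" where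
  "two_fan_emb s p = (if fst p < s then Inl p else Inr (fst p - s, snd p))"

lemma fan_union_two_fans:
  assumes "2 \<le> a" "2 \<le> b"
  shows "fan_union (s + k) (\<lambda>j. if j < s then a else b) (two_fan_emb s)"
proof
  show "inj_on (two_fan_emb s) (Sigma {..<s + k} (\<lambda>j. {..if j < s then a else b}))"
    by (rule inj_onI) (auto simp: two_fan_emb_def prod_eq_iff split: if_splits)
qed (use assms in auto)

lemma gunion_copies_fan_eq:
  fixes s k a b :: nat
  assumes "2 \<le> a" "2 \<le> b"
  shows "gunion (copies s (fan a)) (copies k (fan b))
    = fan_union.G (s + k) (\<lambda>j. if j < s then a else b) (two_fan_emb s)"
proof -
  interpret fan_union "s + k" "\<lambda>j. if j < s then a else b" "two_fan_emb s"
    using assms by (rule fan_union_two_fans)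
  let ?shift = "\<lambda>(i, v). (s + i, v)"
  have idx: "Sigma {..<s + k} (\<lambda>j. f (if j < s then a else b))
      = {..<s} \<times> f a \<union> ?shift ` ({..<k} \<times> f b)" for f
    using Sigma_lessThan_add[of s k "f a" "f b"] by (simp add: if_distrib)
  have low: "spoke ` ({..<s} \<times> A) = (`) Inl ` (\<lambda>(i, v). {(i, 0), (i, v)}) ` ({..<s} \<times> A)"
    "rim_edge ` ({..<s} \<times> A) = (`) Inl ` (\<lambda>(i, v). {(i, v), (i, Suc v)}) ` ({..<s} \<times> A)"
    "two_fan_emb s ` ({..<s} \<times> A) = Inl ` ({..<s} \<times> A)" for A
    unfolding image_comp by (auto simp: spoke_def rim_edge_def two_fan_emb_def intro!: image_cong)
  have high:
    "spoke ` ?shift ` ({..<k} \<times> B) = (`) Inr ` (\<lambda>(i, v). {(i, 0), (i, v)}) ` ({..<k} \<times> B)"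
    "rim_edge ` ?shift ` ({..<k} \<times> B)
       = (`) Inr ` (\<lambda>(i, v). {(i, v), (i, Suc v)}) ` ({..<k} \<times> B)"
    for B
    unfolding image_comp by (auto simp: spoke_def rim_edge_def two_fan_emb_def intro!: image_cong)
  have "two_fan_emb s \<circ> ?shift = Inr"
    by (auto simp: two_fan_emb_def)
  then have high_verts: "two_fan_emb s ` ?shift ` ({..<k} \<times> B) = Inr ` ({..<k} \<times> B)" for B
    by (simp add: image_comp)
  show ?thesis
    unfolding gunion_def G_def vertex_idx_def spoke_idx_def rim_idx_def idx idx[of "\<lambda>x. {1..x - 1}"]
      image_Un low high high_verts copies_verts fan_verts copies_fan_edges atLeast0AtMost
    by (simp add: Un_ac)
qed

theorem H_supermagic_copies_two_fans:
  assumes "2 \<le> a" "2 \<le> b"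
  shows "H_supermagic (gunion (copies s (fan a)) (copies k (fan b))) C3"
  using fan_union.C3_supermagic[OF fan_union_two_fans[OF assms]] gunion_copies_fan_eq[OF assms]
  by simp

theorem theorem9:
  fixes s k n :: nat
  assumes "s \<ge> 1" and "k \<ge> 1" and "n \<ge> 3"
  shows "H_supermagic (gunion (copies s (fan (n + 1))) (copies k (fan n))) C3"
  using H_supermagic_copies_two_fans[of "n + 1" n s k] assms(3) by simp

end
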